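(* Let $(X,c)$ be a finite metric space with $n$ points and let $1\le k\le n$. For every execution of the Reverse Greedy algorithm (with arbitrary tie-breaking), the set $R_k$ it produces satisfies $$\mathrm{cost}(R_k) \;\le\; 2H_{n-k}\cdot \min_{F\subseteq X,\ |F|=k}\mathrm{cost}(F),$$ where $H_m = \sum_{i=1}^m 1/i$ is the $m$-th harmonic number ($H_0=0$). In particular, the approximation ratio of Reverse Greedy for the metric $k$-median problem is $O(\log n)$.
   Context: For $x\in X$ and nonempty $F\subseteq X$, $c_{xF}=\min_{f\in F}c_{xf}$, and $\mathrm{cost}(F)=\sum_{x\in X} c_{xF}$. The Reverse Greedy algorithm on an $n$-point space $X$: set $R_n = X$; for $t = n, n-1,\dots,2$, set $R_{t-1} = R_t\setminus\{r_t\}$ where $r_t\in R_t$ is chosen (ties broken arbitrarily) to minimize $\mathrm{cost}(R_{t-1})$. *)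

theory Defs
  imports "HOL-Analysis.Analysis"
begin

definition finite_metric_space :: "'a set \<Rightarrow> ('a \<Rightarrow> 'a \<Rightarrow> real) \<Rightarrow> bool" where
  "finite_metric_space X c \<longleftrightarrow> finite X \<and>
     (\<forall>x\<in>X. \<forall>y\<in>X. c x y \<ge> 0) \<and>
     (\<forall>x\<in>X. \<forall>y\<in>X. c x y = 0 \<longleftrightarrow> x = y) \<and>
     (\<forall>x\<in>X. \<forall>y\<in>X. c x y = c y x) \<and>
     (\<forall>x\<in>X. \<forall>y\<in>X. \<forall>z\<in>X. c x z \<le> c x y + c y z)"

definition dist_to_set :: "('a \<Rightarrow> 'a \<Rightarrow> real) \<Rightarrow> 'a \<Rightarrow> 'a set \<Rightarrow> real" where
  "dist_to_set c x F = Min ((\<lambda>f. c x f) ` F)"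

definition cost :: "'a set \<Rightarrow> ('a \<Rightarrow> 'a \<Rightarrow> real) \<Rightarrow> 'a set \<Rightarrow> real" where
  "cost X c F = (\<Sum>x\<in>X. dist_to_set c x F)"

definition reverse_greedy_run :: "'a set \<Rightarrow> ('a \<Rightarrow> 'a \<Rightarrow> real) \<Rightarrow> (nat \<Rightarrow> 'a set) \<Rightarrow> bool" where
  "reverse_greedy_run X c R \<longleftrightarrow>
     R (card X) = X \<and>
     (\<forall>t\<in>{2..card X}. \<exists>r\<in>R t. R (t - 1) = R t - {r} \<and>
        (\<forall>r'\<in>R t. cost X c (R t - {r}) \<le> cost X c (R t - {r'})))"

end

theory Submission
  imports Defs
begin

text \<open>Fix an optimal k-median solution F and a current greedy solution R with t > k points.
  Every f \<in> F has a nearest point in R; the set D of points of R that are nearest to no point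
  of F has at least t - k elements. Deleting r \<in> D only hurts the clients x whose nearest point
  is r, and such an x can be rerouted via its optimal facility f to the nearest point of f in R,
  at extra cost at most 2 c_{xF}. Summing over D, the total increase is at most 2 cost(F), so the
  greedy deletion increases the cost by at most 2 cost(F) / (t - k). Summing these increments
  from t = n (where the cost is 0) down to k gives the bound 2 H_{n-k} cost(F).\<close>

lemma finite_metric_spaceD:
  assumes "finite_metric_space X c"
  shows "finite X"
    and "\<And>x y. x \<in> X \<Longrightarrow> y \<in> X \<Longrightarrow> c x y \<ge> 0"
    and "\<And>x. x \<in> X \<Longrightarrow> c x x = 0"
    and "\<And>x y. x \<in> X \<Longrightarrow> y \<in> X \<Longrightarrow> c x y = c y x"
    and "\<And>x y z. x \<in> X \<Longrightarrow> y \<in> X \<Longrightarrow> z \<in> X \<Longrightarrow> c x z \<le> c x y + c y z"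
  using assms unfolding finite_metric_space_def by auto

lemma dist_to_set_le: "finite A \<Longrightarrow> a \<in> A \<Longrightarrow> dist_to_set c x A \<le> c x a"
  unfolding dist_to_set_def by (rule Min_le) auto

lemma dist_to_set_arg_min:
  assumes "finite A" "A \<noteq> {}"
  shows "dist_to_set c x A = c x (arg_min_on (c x) A)"
  unfolding dist_to_set_def
  using assms by (intro Min_eqI) (auto intro: arg_min_least arg_min_if_finite(1))

lemma dist_to_set_antimono:
  "finite B \<Longrightarrow> A \<subseteq> B \<Longrightarrow> A \<noteq> {} \<Longrightarrow> dist_to_set c x B \<le> dist_to_set c x A"
  unfolding dist_to_set_def by (rule Min_antimono) auto

lemma cost_antimono:
  "finite X \<Longrightarrow> finite B \<Longrightarrow> A \<subseteq> B \<Longrightarrow> A \<noteq> {} \<Longrightarrow> cost X c B \<le> cost X c A"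
  unfolding cost_def by (intro sum_mono dist_to_set_antimono)

lemma dist_to_set_nonneg:
  assumes "finite_metric_space X c" "x \<in> X" "A \<subseteq> X" "A \<noteq> {}"
  shows "dist_to_set c x A \<ge> 0"
proof -
  have "finite A"
    using finite_subset[OF assms(3) finite_metric_spaceD(1)[OF assms(1)]] .
  have "arg_min_on (c x) A \<in> X"
    using subsetD[OF assms(3) arg_min_if_finite(1)[OF \<open>finite A\<close> assms(4)]] .
  then show ?thesis
    using dist_to_set_arg_min[OF \<open>finite A\<close> assms(4), of c x] finite_metric_spaceD(2)[OF assms(1,2)]
    by simp
qed

lemma cost_whole_space:
  assumes "finite_metric_space X c"
  shows "cost X c X = 0"
proof -
  have "dist_to_set c x X = 0" if "x \<in> X" for x
  proof -
    have "dist_to_set c x X \<le> c x x"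
      using finite_metric_spaceD(1)[OF assms] that by (rule dist_to_set_le)
    moreover have "dist_to_set c x X \<ge> 0"
      using that by (intro dist_to_set_nonneg[OF assms that]) auto
    ultimately show ?thesis
      using finite_metric_spaceD(3)[OF assms that] by simp
  qed
  then show ?thesis
    unfolding cost_def by simp
qed

lemma dist_to_set_remove_le:
  assumes M: "finite_metric_space X c" and x: "x \<in> X"
    and RX: "R \<subseteq> X" and FX: "F \<subseteq> X" and "F \<noteq> {}"
    and r: "r \<in> R" "r \<notin> (\<lambda>f. arg_min_on (c f) R) ` F"
  shows "dist_to_set c x (R - {r}) - dist_to_set c x R
           \<le> (if arg_min_on (c x) R = r then 2 * dist_to_set c x F else 0)"
proof -
  note metric = finite_metric_spaceD[OF M]
  have fR: "finite R" and fF: "finite F"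
    using finite_subset[OF RX metric(1)] finite_subset[OF FX metric(1)] .
  have "R \<noteq> {}"
    using r(1) by blast
  note near_R = arg_min_if_finite(1)[OF fR this, of "c x"] dist_to_set_arg_min[OF fR this, of c x]
  show ?thesis
  proof (cases "arg_min_on (c x) R = r")
    case True
    define f where "f = arg_min_on (c x) F"
    define r' where "r' = arg_min_on (c f) R"
    have f: "f \<in> F" "dist_to_set c x F = c x f"
      unfolding f_def
      using arg_min_if_finite(1)[OF fF \<open>F \<noteq> {}\<close>] dist_to_set_arg_min[OF fF \<open>F \<noteq> {}\<close>] .
    have "r' \<in> R"
      unfolding r'_def using arg_min_if_finite(1)[OF fR \<open>R \<noteq> {}\<close>] .
    moreover have "r' \<noteq> r"
      using r(2) f(1) unfolding r'_def by auto
    ultimately have r': "r' \<in> R - {r}"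
      by simp
    have "x \<in> X" "f \<in> X" "r \<in> X" "r' \<in> X"
      using x f(1) FX r(1) RX r' by auto
    have "dist_to_set c x (R - {r}) \<le> c x r'"
      using fR r' by (intro dist_to_set_le) auto
    also have "\<dots> \<le> c x f + c f r'"
      by (rule metric(5)[OF \<open>x \<in> X\<close> \<open>f \<in> X\<close> \<open>r' \<in> X\<close>])
    also have "c f r' \<le> c f r"
      unfolding r'_def by (rule arg_min_least[OF fR \<open>R \<noteq> {}\<close> r(1)])
    also have "\<dots> \<le> c f x + c x r"
      by (rule metric(5)[OF \<open>f \<in> X\<close> \<open>x \<in> X\<close> \<open>r \<in> X\<close>])
    finally show ?thesis
      using True near_R(2) f(2) metric(4)[OF \<open>x \<in> X\<close> \<open>f \<in> X\<close>] by simp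
  next
    case False
    then have "dist_to_set c x (R - {r}) \<le> c x (arg_min_on (c x) R)"
      using fR near_R(1) by (intro dist_to_set_le) auto
    with False near_R(2) show ?thesis
      by simp
  qed
qed

lemma sum_cost_increase_remove_le:
  assumes M: "finite_metric_space X c" and RX: "R \<subseteq> X" and FX: "F \<subseteq> X" and "F \<noteq> {}"
  defines "D \<equiv> R - (\<lambda>f. arg_min_on (c f) R) ` F"
  shows "(\<Sum>r\<in>D. cost X c (R - {r}) - cost X c R) \<le> 2 * cost X c F"
proof -
  have "finite D"
    using finite_subset[OF RX finite_metric_spaceD(1)[OF M]] unfolding D_def by simp
  define h where "h x = 2 * dist_to_set c x F" for x
  have "(\<Sum>r\<in>D. cost X c (R - {r}) - cost X c R)
      = (\<Sum>r\<in>D. \<Sum>x\<in>X. dist_to_set c x (R - {r}) - dist_to_set c x R)"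
    unfolding cost_def by (simp add: sum_subtractf)
  also have "\<dots> \<le> (\<Sum>r\<in>D. \<Sum>x\<in>X. if arg_min_on (c x) R = r then h x else 0)"
    unfolding h_def D_def using assms by (intro sum_mono dist_to_set_remove_le) auto
  also have "\<dots> = (\<Sum>x\<in>X. if arg_min_on (c x) R \<in> D then h x else 0)"
    by (subst sum.swap) (simp add: \<open>finite D\<close>)
  also have "\<dots> \<le> (\<Sum>x\<in>X. h x)"
    unfolding h_def using dist_to_set_nonneg[OF M _ FX \<open>F \<noteq> {}\<close>] by (intro sum_mono) auto
  also have "\<dots> = 2 * cost X c F"
    unfolding h_def cost_def by (simp add: sum_distrib_left)
  finally show ?thesis .
qed

lemma greedy_cost_increase_remove_le:
  assumes M: "finite_metric_space X c" and RX: "R \<subseteq> X" and FX: "F \<subseteq> X" and "F \<noteq> {}"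
    and less: "card F < card R"
    and r: "r \<in> R" and greedy: "\<forall>r'\<in>R. cost X c (R - {r}) \<le> cost X c (R - {r'})"
  shows "cost X c (R - {r}) - cost X c R \<le> 2 * cost X c F / real (card R - card F)"
proof -
  define D where "D = R - (\<lambda>f. arg_min_on (c f) R) ` F"
  define d where "d = cost X c (R - {r}) - cost X c R"
  have fX: "finite X"
    by (rule finite_metric_spaceD(1)[OF M])
  have fR: "finite R" and fF: "finite F"
    using finite_subset[OF RX fX] finite_subset[OF FX fX] .
  have "card R - card F \<le> card R - card ((\<lambda>f. arg_min_on (c f) R) ` F)"
    using card_image_le[OF fF, of "\<lambda>f. arg_min_on (c f) R"] by linarith
  also have "\<dots> \<le> card D"
    unfolding D_def using finite_imageI[OF fF] by (rule diff_card_le_card_Diff)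
  finally have card_D: "card R - card F \<le> card D" .
  have "card F > 0"
    using fF \<open>F \<noteq> {}\<close> by auto
  then have "card (R - {r}) > 0"
    using less r fR by (simp add: card_Diff_singleton)
  then have "R - {r} \<noteq> {}"
    by (simp add: card_gt_0_iff)
  then have "d \<ge> 0"
    unfolding d_def using cost_antimono[OF fX fR Diff_subset] by simp
  then have "real (card R - card F) * d \<le> real (card D) * d"
    using card_D by (intro mult_right_mono) auto
  also have "\<dots> = (\<Sum>r'\<in>D. d)"
    by simp
  also have "\<dots> \<le> (\<Sum>r'\<in>D. cost X c (R - {r'}) - cost X c R)"
  proof (rule sum_mono)
    fix r' assume "r' \<in> D"
    then show "d \<le> cost X c (R - {r'}) - cost X c R"
      using greedy unfolding d_def D_def by simp
  qed
  also have "\<dots> \<le> 2 * cost X c F"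
    unfolding D_def using sum_cost_increase_remove_le[OF M RX FX \<open>F \<noteq> {}\<close>] .
  finally have "d * real (card R - card F) \<le> 2 * cost X c F"
    by (simp only: mult.commute)
  moreover have "real (card R - card F) > 0"
    using less by simp
  ultimately show ?thesis
    unfolding d_def by (simp only: pos_le_divide_eq)
qed

lemma reverse_greedy_run_subset_card:
  assumes "finite X" "reverse_greedy_run X c R" "1 \<le> t" "t \<le> card X"
  shows "R t \<subseteq> X \<and> card (R t) = t"
  using assms(3,4)
proof (induction "card X - t" arbitrary: t)
  case 0
  then show ?case
    using assms(2) unfolding reverse_greedy_run_def by auto
next
  case (Suc j)
  then have IH: "R (Suc t) \<subseteq> X \<and> card (R (Suc t)) = Suc t"
    by simp
  have "Suc t \<in> {2..card X}"
    using Suc.prems Suc.hyps(2) by auto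
  then obtain r where "r \<in> R (Suc t)" "R t = R (Suc t) - {r}"
    using assms(2) unfolding reverse_greedy_run_def by fastforce
  with IH assms(1) show ?case
    by (auto simp: finite_subset)
qed

lemma reverse_greedy_run_cost_increase_le:
  assumes M: "finite_metric_space X c" and run: "reverse_greedy_run X c R"
    and FX: "F \<subseteq> X" and "F \<noteq> {}" and t: "card F < t" "t \<le> card X"
  shows "cost X c (R (t - 1)) - cost X c (R t) \<le> 2 * cost X c F / real (t - card F)"
proof -
  have fX: "finite X"
    by (rule finite_metric_spaceD(1)[OF M])
  have "card F > 0"
    using finite_subset[OF FX fX] \<open>F \<noteq> {}\<close> by auto
  then have "t \<in> {2..card X}"
    using t by auto
  then obtain r where r: "r \<in> R t" "R (t - 1) = R t - {r}"
    and greedy: "\<forall>r'\<in>R t. cost X c (R t - {r}) \<le> cost X c (R t - {r'})"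
    using run unfolding reverse_greedy_run_def by blast
  have Rt: "R t \<subseteq> X" "card (R t) = t"
    using reverse_greedy_run_subset_card[OF fX run] t \<open>card F > 0\<close> by auto
  with t have "card F < card (R t)"
    by simp
  from greedy_cost_increase_remove_le[OF M Rt(1) FX \<open>F \<noteq> {}\<close> this r(1) greedy]
  show ?thesis
    using r(2) Rt(2) by simp
qed

lemma telescoping_harm_bound:
  fixes g :: "nat \<Rightarrow> real"
  assumes step: "\<And>t. k < t \<Longrightarrow> t \<le> n \<Longrightarrow> g (t - 1) - g t \<le> a / real (t - k)"
    and "k \<le> n"
  shows "g k \<le> g n + a * harm (n - k)"
proof -
  have "g k \<le> g (k + m) + a * harm m" if "k + m \<le> n" for m
    using that
  proof (induction m)
    case 0
    then show ?case
      by (simp add: harm_expand)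
  next
    case (Suc m)
    then have "g k \<le> g (k + m) + a * harm m"
      by simp
    moreover have "g (k + m) - g (k + Suc m) \<le> a / real (Suc m)"
      using step[of "k + Suc m"] Suc.prems by simp
    ultimately show ?case
      by (simp add: harm_Suc distrib_left divide_inverse)
  qed
  from this[of "n - k"] show ?thesis
    using \<open>k \<le> n\<close> by simp
qed

lemma optimal_k_median_exists:
  assumes "finite X" "k \<le> card X"
  obtains F where "F \<subseteq> X" "card F = k"
    "cost X c F = Min {cost X c F | F. F \<subseteq> X \<and> card F = k}"
proof -
  let ?S = "{cost X c F | F. F \<subseteq> X \<and> card F = k}"
  have "?S = cost X c ` {F. F \<subseteq> X \<and> card F = k}"
    by auto
  then have "finite ?S"
    using assms(1) by simp
  obtain F0 where "F0 \<subseteq> X" "card F0 = k"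
    using obtain_subset_with_card_n[OF assms(2)] .
  then have "?S \<noteq> {}"
    by auto
  with \<open>finite ?S\<close> have "Min ?S \<in> ?S"
    by (rule Min_in)
  then obtain F where "F \<subseteq> X" "card F = k" "cost X c F = Min ?S"
    by auto
  then show ?thesis
    by (rule that)
qed

theorem mainTheorem4:
  fixes X :: "'a set" and c :: "'a \<Rightarrow> 'a \<Rightarrow> real" and R :: "nat \<Rightarrow> 'a set" and k :: nat
  assumes "finite_metric_space X c"
    and "reverse_greedy_run X c R"
    and "1 \<le> k" and "k \<le> card X"
  shows "cost X c (R k) \<le>
           2 * harm (card X - k) * Min {cost X c F | F. F \<subseteq> X \<and> card F = k}"
proof -
  note M = assms(1) and run = assms(2)
  have fX: "finite X"
    using finite_metric_spaceD(1)[OF M] .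
  obtain F where F: "F \<subseteq> X" "card F = k"
    and opt: "cost X c F = Min {cost X c F | F. F \<subseteq> X \<and> card F = k}"
    using optimal_k_median_exists[OF fX assms(4)] .
  have "F \<noteq> {}"
    using F(2) assms(3) by auto
  have step: "cost X c (R (t - 1)) - cost X c (R t) \<le> 2 * cost X c F / real (t - k)"
    if "k < t" "t \<le> card X" for t
    using reverse_greedy_run_cost_increase_le[OF M run F(1) \<open>F \<noteq> {}\<close>] that F(2) by simp
  have "R (card X) = X"
    using run unfolding reverse_greedy_run_def by simp
  then show ?thesis
    using telescoping_harm_bound[OF step assms(4)] cost_whole_space[OF M] opt
    by (simp add: mult_ac)
qed

end
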